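(* Let $h=(v_0,v_1,\dots,v_{n+1})$ be a Hamiltonian cycle over $N$ for an FSTSP instance $(n,N,t_R,t_D)$, and let $0\le i<j<k\le n+1$ be such that the drone is fast in operation $o_{i,j,k}$ (with respect to $h$). Then there exists an optimal solution of the h-FSTSP for $h$ that contains no operation of the form $o_{i',j,k'}$ with $0\le i'\le i$, $k\le k'\le n+1$ and $(i',k')\neq(i,k)$. That is, all such operations can be ignored by an algorithm for the h-FSTSP without losing optimality.
   Context: An FSTSP instance consists of an integer $n>0$, the set of customers $C=\{1,\dots,n\}$, the node set $N=\{0,1,\dots,n+1\}$ where $0$ and $n+1$ both denote the depot, and nonnegative truck travel times $t_R(u,v)$ and drone travel times $t_D(u,v)$ for all pairs of nodes $u,v$. An operation is a pair $o=(r,d)$: $r=(v^r_1,\dots,v^r_{|r|})$, $|r|\ge 2$, is the truck path with time $t(r)=\sum_{\ell=1}^{|r|-1} t_R(v^r_\ell,v^r_{\ell+1})$; $d$ is either empty or $d=(v^r_1,v^d,v^r_{|r|})$ with $v^d\in C$ a drone node not on $r$, with time $t(d)=t_D(v^r_1,v^d)+t_D(v^d,v^r_{|r|})$. The time of the operation is $t(o)=\max\{t(r),t(d)\}$ if $d$ is nonempty and $t(o)=t(r)$ otherwise. A solution is a sequence $S=(o_1,\dots,o_m)$ of operations $o_\ell=(r_\ell,d_\ell)$ such that the first node of $r_1$ is the depot $0$, the last node of $r_m$ is the depot $n+1$, the depot appears in no other position, for each $\ell<m$ the last node of $r_\ell$ equals the first node of $r_{\ell+1}$, and every customer is served exactly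 once (as a truck node, shared endpoints of consecutive truck paths counting once, or as a drone node). Its time is $t(S)=\sum_\ell t(o_\ell)$. A Hamiltonian cycle over $N$ is a sequence $h=(v_0,\dots,v_{n+1})$ with $v_0=0$, $v_{n+1}=n+1$ and $(v_1,\dots,v_n)$ a permutation of $C$. A solution respects $h$ if the truck nodes, in order of visit, appear in the same relative order as in $h$ and every drone node lies strictly between its operation's launch and rendezvous nodes in $h$; the h-FSTSP asks for a minimum-time solution among those respecting $h$. For indices $i<j<k$, $o_{i,j,k}=(r,d)$ denotes the operation with truck path $r=(v_i,\dots,v_{j-1},v_{j+1},\dots,v_k)$ and drone path $d=(v_i,v_j,v_k)$. The drone is fast in $o_{i,j,k}$ if $t(d)\le t(r)$. *)

theory Defs
  imports Complex_Main
begin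

text \<open>Nodes are natural numbers: 0 and n+1 are the two copies of the depot,
  customers are 1..n.  An operation is a pair (r, d) where r is the truck path
  (list of nodes) and d = Some w encodes the drone path (hd r, w, last r),
  d = None the empty drone path.  A Hamiltonian cycle h = (v_0,...,v_{n+1})
  is represented by the function v (index to node).\<close>

type_synonym operation = "nat list \<times> nat option"

fun path_time :: "(nat \<Rightarrow> nat \<Rightarrow> real) \<Rightarrow> nat list \<Rightarrow> real" where
  "path_time tR (x # y # xs) = tR x y + path_time tR (y # xs)"
| "path_time tR _ = 0"

definition drone_time :: "(nat \<Rightarrow> nat \<Rightarrow> real) \<Rightarrow> operation \<Rightarrow> nat \<Rightarrow> real" where
  "drone_time tD op w = tD (hd (fst op)) w + tD w (last (fst op))"

definition op_time :: "(nat \<Rightarrow> nat \<Rightarrow> real) \<Rightarrow> (nat \<Rightarrow> nat \<Rightarrow> real) \<Rightarrow> operation \<Rightarrow> real" where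
  "op_time tR tD op = (case snd op of
      None \<Rightarrow> path_time tR (fst op)
    | Some w \<Rightarrow> max (path_time tR (fst op)) (drone_time tD op w))"

definition sol_time :: "(nat \<Rightarrow> nat \<Rightarrow> real) \<Rightarrow> (nat \<Rightarrow> nat \<Rightarrow> real) \<Rightarrow> operation list \<Rightarrow> real" where
  "sol_time tR tD S = sum_list (map (op_time tR tD) S)"

text \<open>Truck nodes in order of visit (shared endpoints counted once).\<close>
definition truck_seq :: "operation list \<Rightarrow> nat list" where
  "truck_seq S = (case S of [] \<Rightarrow> [] | op # os \<Rightarrow> fst op @ concat (map (tl \<circ> fst) os))"

definition drone_nodes :: "operation list \<Rightarrow> nat list" where
  "drone_nodes S = concat (map (\<lambda>op. case snd op of None \<Rightarrow> [] | Some w \<Rightarrow> [w]) S)"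

definition is_solution :: "nat \<Rightarrow> operation list \<Rightarrow> bool" where
  "is_solution n S \<longleftrightarrow>
     S \<noteq> [] \<and>
     (\<forall>op \<in> set S. length (fst op) \<ge> 2 \<and> set (fst op) \<subseteq> {0..n+1} \<and>
        (\<forall>w. snd op = Some w \<longrightarrow> w \<in> {1..n} \<and> w \<notin> set (fst op))) \<and>
     hd (fst (hd S)) = 0 \<and> last (fst (last S)) = n + 1 \<and>
     (\<forall>l. Suc l < length S \<longrightarrow> last (fst (S ! l)) = hd (fst (S ! Suc l))) \<and>
     count_list (truck_seq S) 0 = 1 \<and> count_list (truck_seq S) (n + 1) = 1 \<and>
     (\<forall>c \<in> {1..n}. count_list (truck_seq S @ drone_nodes S) c = 1)"

definition is_hamiltonian :: "nat \<Rightarrow> (nat \<Rightarrow> nat) \<Rightarrow> bool" where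
  "is_hamiltonian n v \<longleftrightarrow> v 0 = 0 \<and> v (n + 1) = n + 1 \<and> bij_betw v {1..n} {1..n}"

definition respects_h :: "nat \<Rightarrow> (nat \<Rightarrow> nat) \<Rightarrow> operation list \<Rightarrow> bool" where
  "respects_h n v S \<longleftrightarrow>
     (\<exists>ps. sorted_wrt (<) ps \<and> (\<forall>q \<in> set ps. q \<le> n + 1) \<and> map v ps = truck_seq S) \<and>
     (\<forall>op \<in> set S. \<forall>w. snd op = Some w \<longrightarrow>
        (\<exists>a b c. a < b \<and> b < c \<and> c \<le> n + 1 \<and>
           v a = hd (fst op) \<and> v b = w \<and> v c = last (fst op)))"

definition h_optimal :: "nat \<Rightarrow> (nat \<Rightarrow> nat \<Rightarrow> real) \<Rightarrow> (nat \<Rightarrow> nat \<Rightarrow> real) \<Rightarrow> (nat \<Rightarrow> nat)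
    \<Rightarrow> operation list \<Rightarrow> bool" where
  "h_optimal n tR tD v S \<longleftrightarrow> is_solution n S \<and> respects_h n v S \<and>
     (\<forall>S'. is_solution n S' \<and> respects_h n v S' \<longrightarrow> sol_time tR tD S \<le> sol_time tR tD S')"

text \<open>o_{i,j,k}: truck path (v_i,...,v_{j-1},v_{j+1},...,v_k), drone path (v_i,v_j,v_k).\<close>
definition op_ijk :: "(nat \<Rightarrow> nat) \<Rightarrow> nat \<Rightarrow> nat \<Rightarrow> nat \<Rightarrow> operation" where
  "op_ijk v i j k = (map v ([i..<j] @ [Suc j..<Suc k]), Some (v j))"

definition drone_fast :: "(nat \<Rightarrow> nat \<Rightarrow> real) \<Rightarrow> (nat \<Rightarrow> nat \<Rightarrow> real) \<Rightarrow> operation \<Rightarrow> bool" where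
  "drone_fast tR tD op \<longleftrightarrow> (case snd op of None \<Rightarrow> False
      | Some w \<Rightarrow> drone_time tD op w \<le> path_time tR (fst op))"

end

theory Submission
  imports Defs
begin

text \<open>Take an optimal solution and suppose it contains an operation \<open>o' = o_{i',j,k'}\<close>
  with \<open>i' \<le> i\<close>, \<open>k \<le> k'\<close>. The truck path of \<open>o'\<close> is the truck path of \<open>o_{i,j,k}\<close> extended
  by the stretches \<open>v_{i'},\<dots>,v_i\<close> and \<open>v_k,\<dots>,v_{k'}\<close> of \<open>h\<close>. Replacing \<open>o'\<close> by these two
  plain truck operations around \<open>o_{i,j,k}\<close> changes neither the order of truck visits nor the
  drone nodes, so the result is again a solution respecting \<open>h\<close>. Since the drone is fast in
  \<open>o_{i,j,k}\<close>, each of the new operations costs exactly its truck time, and these add up to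
  \<open>t(r') \<le> t(o')\<close>. Hence the new solution is optimal as well, and as \<open>v_j\<close> is now served as
  drone node of \<open>o_{i,j,k}\<close> only, no other operation \<open>o_{i'',j,k''}\<close> can occur in it.\<close>

lemma successively_iff_nth:
  "successively P xs \<longleftrightarrow> (\<forall>l. Suc l < length xs \<longrightarrow> P (xs ! l) (xs ! Suc l))"
  by (induction P xs rule: successively.induct) (auto simp: All_less_Suc2)

lemma upt_append: "a \<le> b \<Longrightarrow> b \<le> c \<Longrightarrow> [a..<b] @ [b..<c] = [a..<c]"
  by (metis le_add_diff_inverse upt_add_eq_append)

definition linked :: "operation \<Rightarrow> operation \<Rightarrow> bool" where
  "linked a b \<longleftrightarrow> last (fst a) = hd (fst b)"

definition well_formed_op :: "nat \<Rightarrow> operation \<Rightarrow> bool" where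
  "well_formed_op n op \<longleftrightarrow> length (fst op) \<ge> 2 \<and> set (fst op) \<subseteq> {0..n+1} \<and>
     (\<forall>w. snd op = Some w \<longrightarrow> w \<in> {1..n} \<and> w \<notin> set (fst op))"

definition drone_respects_h :: "nat \<Rightarrow> (nat \<Rightarrow> nat) \<Rightarrow> operation \<Rightarrow> bool" where
  "drone_respects_h n v op \<longleftrightarrow> (\<forall>w. snd op = Some w \<longrightarrow>
     (\<exists>a b c. a < b \<and> b < c \<and> c \<le> n + 1 \<and> v a = hd (fst op) \<and> v b = w \<and> v c = last (fst op)))"

lemma is_solution_iff:
  "is_solution n S \<longleftrightarrow>
     S \<noteq> [] \<and> (\<forall>op \<in> set S. well_formed_op n op) \<and>
     hd (fst (hd S)) = 0 \<and> last (fst (last S)) = n + 1 \<and> successively linked S \<and>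
     count_list (truck_seq S) 0 = 1 \<and> count_list (truck_seq S) (n + 1) = 1 \<and>
     (\<forall>c \<in> {1..n}. count_list (truck_seq S @ drone_nodes S) c = 1)"
  unfolding is_solution_def well_formed_op_def successively_iff_nth linked_def by blast

lemma respects_h_iff:
  "respects_h n v S \<longleftrightarrow>
     (\<exists>ps. sorted_wrt (<) ps \<and> (\<forall>q \<in> set ps. q \<le> n + 1) \<and> map v ps = truck_seq S) \<and>
     (\<forall>op \<in> set S. drone_respects_h n v op)"
  unfolding respects_h_def drone_respects_h_def by blast

lemma truck_seq_Cons: "truck_seq (q # Q) = fst q @ concat (map (tl \<circ> fst) Q)"
  by (simp add: truck_seq_def)

lemma truck_seq_append:
  "Q \<noteq> [] \<Longrightarrow> truck_seq (Q @ R) = truck_seq Q @ concat (map (tl \<circ> fst) R)"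
  by (cases Q) (auto simp: truck_seq_def)

lemma drone_nodes_append [simp]: "drone_nodes (Q @ R) = drone_nodes Q @ drone_nodes R"
  by (simp add: drone_nodes_def)

lemma hd_truck_seq: "Q \<noteq> [] \<Longrightarrow> fst (hd Q) \<noteq> [] \<Longrightarrow> hd (truck_seq Q) = hd (fst (hd Q))"
  by (cases Q) (auto simp: truck_seq_def)

lemma last_truck_seq:
  assumes "Q \<noteq> []" "\<forall>q\<in>set Q. length (fst q) \<ge> 2"
  shows "last (truck_seq Q) = last (fst (last Q))"
  using assms
proof (induction Q rule: rev_induct)
  case (snoc q Q)
  have "tl (fst q) \<noteq> []" using snoc.prems by (cases "fst q") auto
  then show ?case
    using snoc by (cases "Q = []") (simp_all add: truck_seq_Cons truck_seq_append last_tl)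
qed simp

lemma path_time_append:
  "xs \<noteq> [] \<Longrightarrow> path_time tR (xs @ ys) = path_time tR xs + path_time tR (last xs # ys)"
  by (induction xs rule: induct_list012) auto

lemma path_time_truck_seq:
  assumes "Q \<noteq> []" "\<forall>q\<in>set Q. length (fst q) \<ge> 2" "successively linked Q"
  shows "path_time tR (truck_seq Q) = (\<Sum>q\<leftarrow>Q. path_time tR (fst q))"
  using assms
proof (induction Q rule: rev_induct)
  case (snoc q Q)
  show ?case
  proof (cases "Q = []")
    case True then show ?thesis by (simp add: truck_seq_def)
  next
    case False
    have "successively linked Q" and "linked (last Q) q"
      using snoc.prems(3) False by (auto simp: successively_append_iff)
    then have glue: "last (truck_seq Q) = hd (fst q)"
      using last_truck_seq[of Q] False snoc.prems(2) by (simp add: linked_def)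
    have "truck_seq Q \<noteq> []" using False snoc.prems(2) by (cases Q) (auto simp: truck_seq_def)
    moreover have "hd (fst q) # tl (fst q) = fst q" using snoc.prems(2) by (cases "fst q") auto
    ultimately have "path_time tR (truck_seq (Q @ [q])) = path_time tR (truck_seq Q) + path_time tR (fst q)"
      using False glue by (simp add: truck_seq_append path_time_append)
    then show ?thesis using snoc.IH False \<open>successively linked Q\<close> snoc.prems(2) by simp
  qed
qed simp

lemma truck_seq_replace:
  assumes "Q \<noteq> []" "fst (hd Q) \<noteq> []" "truck_seq Q = fst o'"
  shows "truck_seq (A @ Q @ B) = truck_seq (A @ o' # B)"
proof -
  obtain q Q' where Q: "Q = q # Q'" using assms(1) by (cases Q) auto
  have o': "fst o' = fst q @ concat (map (tl \<circ> fst) Q')" using assms(3) Q by (simp add: truck_seq_Cons)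
  show ?thesis
  proof (cases "A = []")
    case True then show ?thesis using Q o' by (simp add: truck_seq_Cons)
  next
    case False
    have "tl (fst o') = tl (fst q) @ concat (map (tl \<circ> fst) Q')" using o' assms(2) Q by simp
    then show ?thesis using False Q by (simp add: truck_seq_append)
  qed
qed

subsection \<open>Replacing an operation by a chain\<close>

lemma replace_op_feasible:
  assumes sol: "is_solution n (A @ o' # B)" and resp: "respects_h n v (A @ o' # B)"
    and Q_ne: "Q \<noteq> []" and Q_ok: "\<forall>q\<in>set Q. well_formed_op n q \<and> drone_respects_h n v q"
    and Q_linked: "successively linked Q" and Q_truck: "truck_seq Q = fst o'"
    and Q_drone: "drone_nodes Q = drone_nodes [o']"
  shows "is_solution n (A @ Q @ B) \<and> respects_h n v (A @ Q @ B)"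
proof -
  have len: "\<forall>q\<in>set Q. length (fst q) \<ge> 2" using Q_ok by (auto simp: well_formed_op_def)
  have hd_ne: "fst (hd Q) \<noteq> []" using len Q_ne by (cases Q) auto
  have truck: "truck_seq (A @ Q @ B) = truck_seq (A @ o' # B)"
    using truck_seq_replace[OF Q_ne hd_ne Q_truck] .
  have drone: "drone_nodes (A @ Q @ B) = drone_nodes (A @ o' # B)"
    using Q_drone by (simp add: drone_nodes_def)
  have hd_Q: "hd (fst (hd Q)) = hd (fst o')"
    using hd_truck_seq[OF Q_ne hd_ne] Q_truck by simp
  have last_Q: "last (fst (last Q)) = last (fst o')"
    using last_truck_seq[OF Q_ne len] Q_truck by simp
  have "successively linked (A @ o' # B)" using sol by (simp add: is_solution_iff)
  then have "successively linked (A @ Q @ B)"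
    using Q_linked Q_ne hd_Q last_Q
    by (cases "B = []"; cases "A = []") (auto simp: successively_append_iff successively_Cons linked_def)
  moreover have "hd (fst (hd (A @ Q @ B))) = 0"
    using sol hd_Q Q_ne by (cases A) (auto simp: is_solution_iff)
  moreover have "last (fst (last (A @ Q @ B))) = n + 1"
    using sol last_Q Q_ne by (cases "B = []") (auto simp: is_solution_iff)
  ultimately have "is_solution n (A @ Q @ B)"
    using sol Q_ok truck drone Q_ne unfolding is_solution_iff by auto
  moreover have "respects_h n v (A @ Q @ B)"
    using resp Q_ok truck unfolding respects_h_iff by auto
  ultimately show ?thesis ..
qed

lemma sol_time_replace_op_le:
  assumes "Q \<noteq> []" "\<forall>q\<in>set Q. length (fst q) \<ge> 2"
    and "successively linked Q" and "truck_seq Q = fst o'"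
    and truck_cost: "\<forall>q\<in>set Q. op_time tR tD q = path_time tR (fst q)"
  shows "sol_time tR tD (A @ Q @ B) \<le> sol_time tR tD (A @ o' # B)"
proof -
  have "sol_time tR tD Q = (\<Sum>q\<leftarrow>Q. path_time tR (fst q))"
    unfolding sol_time_def using truck_cost by (metis (mono_tags, lifting) map_eq_conv)
  also have "\<dots> = path_time tR (fst o')"
    using path_time_truck_seq[OF assms(1-3)] assms(4) by simp
  also have "\<dots> \<le> op_time tR tD o'"
    by (auto simp: op_time_def split: option.split)
  finally show ?thesis by (simp add: sol_time_def)
qed

lemma h_optimal_replace_op:
  assumes opt: "h_optimal n tR tD v (A @ o' # B)"
    and "Q \<noteq> []" and Q_ok: "\<forall>q\<in>set Q. well_formed_op n q \<and> drone_respects_h n v q"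
    and "successively linked Q" and "truck_seq Q = fst o'"
    and "drone_nodes Q = drone_nodes [o']"
    and "\<forall>q\<in>set Q. op_time tR tD q = path_time tR (fst q)"
  shows "h_optimal n tR tD v (A @ Q @ B)"
proof -
  have "\<forall>q\<in>set Q. length (fst q) \<ge> 2" using Q_ok by (auto simp: well_formed_op_def)
  then have "sol_time tR tD (A @ Q @ B) \<le> sol_time tR tD (A @ o' # B)"
    using sol_time_replace_op_le assms(2,4,5,7) by blast
  moreover have "is_solution n (A @ Q @ B) \<and> respects_h n v (A @ Q @ B)"
    using opt replace_op_feasible[OF _ _ assms(2-6)] by (simp add: h_optimal_def)
  ultimately show ?thesis using opt unfolding h_optimal_def by fastforce
qed

subsection \<open>Existence of an optimal solution\<close>

lemma is_hamiltonian_bij_betw: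
  assumes "is_hamiltonian n v"
  shows "bij_betw v {0..n+1} {0..n+1}"
proof -
  have "bij_betw v {0, n+1} {0, n+1}" and "bij_betw v {1..n} {1..n}"
    using assms by (auto simp: is_hamiltonian_def bij_betw_def)
  then have "bij_betw v ({0, n+1} \<union> {1..n}) ({0, n+1} \<union> {1..n})"
    by (rule bij_betw_combine) auto
  moreover have "{0, n+1} \<union> {1..n} = {0..n+1}" by auto
  ultimately show ?thesis by simp
qed

lemma count_list_distinct: "distinct xs \<Longrightarrow> x \<in> set xs \<Longrightarrow> count_list xs x = 1"
  by (induction xs) (auto simp: count_list_0_iff)

lemma single_truck_op_solution:
  assumes "distinct r" "set r = {0..n+1}" "hd r = 0" "last r = n + 1"
  shows "is_solution n [(r, None)]"
proof -
  have "length r = n + 2" using distinct_card[OF assms(1)] assms(2) by simp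
  moreover have "\<forall>c\<in>{0..n+1}. count_list r c = 1" using count_list_distinct[OF assms(1)] assms(2) by simp
  ultimately show ?thesis
    unfolding is_solution_def truck_seq_def drone_nodes_def using assms(2-4) by simp
qed

lemma length_truck_seq_le:
  assumes "respects_h n v S"
  shows "length (truck_seq S) \<le> n + 2"
proof -
  obtain ps where ps: "sorted_wrt (<) ps" "\<forall>q\<in>set ps. q \<le> n + 1" "map v ps = truck_seq S"
    using assms by (auto simp: respects_h_def)
  have "length (truck_seq S) = card (set ps)"
    using ps(1,3) by (metis length_map strict_sorted_iff distinct_card)
  also have "\<dots> \<le> card {0..n+1}" using ps(2) by (intro card_mono) auto
  finally show ?thesis by simp
qed
lemma length_ops_le_length_truck_seq:
  assumes "S \<noteq> []" and len: "\<forall>q\<in>set S. length (fst q) \<ge> 2"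
  shows "length S \<le> length (truck_seq S)" "\<forall>q\<in>set S. length (fst q) \<le> Suc (length (truck_seq S))"
proof -
  obtain q0 Q where S: "S = q0 # Q" using assms(1) by (cases S) auto
  have "\<forall>q\<in>set Q. length (fst q) \<ge> 2" using len S by auto
  then have "length Q \<le> length (concat (map (tl \<circ> fst) Q))" by (induction Q) auto
  moreover have "length (fst q0) \<ge> 2" using len S by auto
  ultimately show "length S \<le> length (truck_seq S)" using S by (simp add: truck_seq_Cons)
  show "\<forall>q\<in>set S. length (fst q) \<le> Suc (length (truck_seq S))"
  proof
    fix q assume "q \<in> set S"
    show "length (fst q) \<le> Suc (length (truck_seq S))"
    proof (cases "q = q0")
      case False
      then have "length (tl (fst q)) \<in> set (map length (map (tl \<circ> fst) Q))"
        using S \<open>q \<in> set S\<close> by auto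
      then have "length (tl (fst q)) \<le> length (concat (map (tl \<circ> fst) Q))"
        unfolding length_concat by (rule member_le_sum_list) simp
      then show ?thesis by (simp add: S truck_seq_Cons)
    qed (simp add: S truck_seq_Cons)
  qed
qed

lemma finite_h_solutions: "finite {S. is_solution n S \<and> respects_h n v S}"
proof -
  let ?Ops = "{r. set r \<subseteq> {0..n+1} \<and> length r \<le> n + 3} \<times> insert None (Some ` {1..n})"
  have "finite ?Ops"
    by (intro finite_cartesian_product finite_lists_length_le finite.insertI finite_imageI) simp_all
  moreover have "{S. is_solution n S \<and> respects_h n v S} \<subseteq> {S. set S \<subseteq> ?Ops \<and> length S \<le> n + 2}"
  proof (rule subsetI, clarify)
    fix S assume sol: "is_solution n S" and resp: "respects_h n v S"
    have wf: "\<forall>q\<in>set S. well_formed_op n q" and "S \<noteq> []"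
      using sol by (auto simp: is_solution_iff)
    then have len: "\<forall>q\<in>set S. length (fst q) \<ge> 2" by (auto simp: well_formed_op_def)
    note bounds = length_ops_le_length_truck_seq[OF \<open>S \<noteq> []\<close> len] length_truck_seq_le[OF resp]
    have "q \<in> ?Ops" if "q \<in> set S" for q
    proof -
      have "well_formed_op n q" "length (fst q) \<le> n + 3" using that wf bounds by auto
      then show ?thesis by (cases "snd q") (auto simp: well_formed_op_def mem_Times_iff)
    qed
    then show "set S \<subseteq> ?Ops \<and> length S \<le> n + 2" using bounds by auto
  qed
  ultimately show ?thesis using finite_lists_length_le finite_subset by blast
qed

lemma h_optimal_exists:
  assumes "is_hamiltonian n v"
  shows "\<exists>S. h_optimal n tR tD v S"
proof -
  let ?F = "{S. is_solution n S \<and> respects_h n v S}"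
  define r where "r = map v [0..<n+2]"
  have "set [0..<n+2] = {0..n+1}" by auto
  then have "bij_betw v (set [0..<n+2]) {0..n+1}"
    using is_hamiltonian_bij_betw[OF assms] by simp
  then have "distinct r" "set r = {0..n+1}"
    unfolding r_def by (simp_all add: bij_betw_def distinct_map)
  moreover have "hd r = 0"
    using assms unfolding r_def by (simp add: is_hamiltonian_def upt_conv_Cons del: upt_Suc)
  moreover have "last r = n + 1"
    using assms unfolding r_def by (simp add: is_hamiltonian_def last_map)
  ultimately have "is_solution n [(r, None)]" by (rule single_truck_op_solution)
  moreover have "respects_h n v [(r, None)]"
    unfolding respects_h_def r_def
    by (auto simp: truck_seq_def intro!: exI[of _ "[0..<n+2]"] simp del: upt_Suc)
  ultimately have "?F \<noteq> {}" by blast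
  moreover have fin: "finite (sol_time tR tD ` ?F)" using finite_h_solutions by blast
  ultimately have "Min (sol_time tR tD ` ?F) \<in> sol_time tR tD ` ?F" by simp
  then obtain S0 where "S0 \<in> ?F" "sol_time tR tD S0 = Min (sol_time tR tD ` ?F)" by auto
  then show ?thesis unfolding h_optimal_def using fin by auto
qed

lemma snd_op_ijk [simp]: "snd (op_ijk v i j k) = Some (v j)"
  by (simp add: op_ijk_def)

lemma hd_op_ijk: "i < j \<Longrightarrow> hd (fst (op_ijk v i j k)) = v i"
  by (simp add: op_ijk_def upt_conv_Cons)

lemma last_op_ijk: "j < k \<Longrightarrow> last (fst (op_ijk v i j k)) = v k"
  by (simp add: op_ijk_def)

lemma length_op_ijk: "i \<le> j \<Longrightarrow> j < k \<Longrightarrow> length (fst (op_ijk v i j k)) = k - i"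
  by (simp add: op_ijk_def)

lemma set_op_ijk: "i \<le> j \<Longrightarrow> j \<le> k \<Longrightarrow> set (fst (op_ijk v i j k)) = v ` ({i..k} - {j})"
proof -
  assume "i \<le> j" "j \<le> k"
  then have "set ([i..<j] @ [Suc j..<Suc k]) = {i..k} - {j}" by auto
  then show ?thesis unfolding op_ijk_def fst_conv set_map by simp
qed

lemma op_ijk_inj:
  assumes inj: "inj_on v {0..N}" and "a < j" "j < b" "b \<le> N" "i < j" "j < k" "k \<le> N"
    and eq: "op_ijk v a j b = op_ijk v i j k"
  shows "a = i \<and> b = k"
proof -
  have "v a = v i" using hd_op_ijk eq assms(2,5) by metis
  then have "a = i" using inj_onD[OF inj] assms by auto
  moreover have "b - a = k - i" using length_op_ijk eq assms by (metis less_imp_le)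
  ultimately show ?thesis using assms by simp
qed

lemma drone_node_unique:
  assumes "is_solution n (A @ q # B)" "snd q = Some w"
  shows "\<forall>p \<in> set A \<union> set B. snd p \<noteq> Some w"
proof -
  have "w \<in> {1..n}" using assms by (auto simp: is_solution_def)
  then have "count_list (drone_nodes (A @ q # B)) w \<le> 1"
    using assms(1) unfolding is_solution_def by (metis count_list_append le_add2)
  moreover have "drone_nodes (A @ q # B) = drone_nodes A @ w # drone_nodes B"
    using assms(2) by (simp add: drone_nodes_def)
  ultimately have "w \<notin> set (drone_nodes A)" "w \<notin> set (drone_nodes B)"
    by (simp_all add: count_list_0_iff[symmetric])
  moreover have "w \<in> set (drone_nodes X)" if "p \<in> set X" "snd p = Some w" for p X
    using that unfolding drone_nodes_def by (auto intro!: bexI[of _ p])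
  ultimately show ?thesis by blast
qed

lemma op_ijk_unique_in_solution:
  assumes "inj_on v {0..N}" "is_solution n (A @ op_ijk v i j k # B)"
    and "i < j" "j < k" "k \<le> N" "a < j" "j < b" "b \<le> N" "(a, b) \<noteq> (i, k)"
  shows "op_ijk v a j b \<notin> set (A @ op_ijk v i j k # B)"
proof
  assume "op_ijk v a j b \<in> set (A @ op_ijk v i j k # B)"
  moreover have "op_ijk v a j b \<notin> set A \<union> set B"
    using drone_node_unique[OF assms(2) snd_op_ijk] snd_op_ijk[of v a j b] by fastforce
  ultimately have "op_ijk v a j b = op_ijk v i j k" by simp
  then show False using op_ijk_inj assms by blast
qed

subsection \<open>Splitting off the truck stretches around \<open>o_{i,j,k}\<close>\<close>

definition truck_op :: "(nat \<Rightarrow> nat) \<Rightarrow> nat \<Rightarrow> nat \<Rightarrow> operation" where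
  "truck_op v a b = (map v [a..<Suc b], None)"

definition split_op_ijk :: "(nat \<Rightarrow> nat) \<Rightarrow> nat \<Rightarrow> nat \<Rightarrow> nat \<Rightarrow> nat \<Rightarrow> nat \<Rightarrow> operation list" where
  "split_op_ijk v i' i j k k' =
     (if i' < i then [truck_op v i' i] else []) @ op_ijk v i j k # (if k < k' then [truck_op v k k'] else [])"

lemma drone_nodes_split_op_ijk: "drone_nodes (split_op_ijk v i' i j k k') = drone_nodes [op_ijk v i' j k']"
  by (simp add: drone_nodes_def split_op_ijk_def truck_op_def)

lemma op_time_split_op_ijk:
  assumes "drone_fast tR tD (op_ijk v i j k)"
  shows "\<forall>q\<in>set (split_op_ijk v i' i j k k'). op_time tR tD q = path_time tR (fst q)"
  using assms by (auto simp: split_op_ijk_def truck_op_def op_time_def drone_fast_def)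

context
  fixes v :: "nat \<Rightarrow> nat" and i' i j k k' :: nat
  assumes order: "i' \<le> i" "i < j" "j < k" "k \<le> k'"
begin

lemma truck_seq_split_op_ijk: "truck_seq (split_op_ijk v i' i j k k') = fst (op_ijk v i' j k')"
proof -
  have pre: "(if i' < i then map v [i'..<Suc i] @ tl (fst (op_ijk v i j k)) else fst (op_ijk v i j k))
      = map v ([i'..<j] @ [Suc j..<Suc k])"
    using order by (auto simp: op_ijk_def upt_conv_Cons upt_append simp del: upt_Suc
        simp flip: append_assoc map_append)
  have "truck_seq (split_op_ijk v i' i j k k')
      = map v ([i'..<j] @ [Suc j..<Suc k]) @ (if k < k' then map v [Suc k..<Suc k'] else [])"
    using pre order
    by (auto simp: split_op_ijk_def truck_op_def truck_seq_def upt_conv_Cons simp del: upt_Suc)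
  also have "\<dots> = fst (op_ijk v i' j k')"
  proof (cases "k < k'")
    case True
    then have "map v [Suc j..<Suc k] @ map v [Suc k..<Suc k'] = map v [Suc j..<Suc k']"
      using order by (simp add: upt_append del: upt_Suc flip: map_append)
    then show ?thesis using True by (simp add: op_ijk_def del: upt_Suc)
  qed (use order in \<open>simp add: op_ijk_def\<close>)
  finally show ?thesis .
qed

lemma linked_split_op_ijk: "successively linked (split_op_ijk v i' i j k k')"
proof -
  have "linked (truck_op v i' i) (op_ijk v i j k)"
    using order by (simp add: linked_def truck_op_def hd_op_ijk)
  moreover have "linked (op_ijk v i j k) (truck_op v k k')"
    using order by (simp add: linked_def truck_op_def last_op_ijk upt_conv_Cons del: upt_Suc)
  ultimately show ?thesis by (simp add: split_op_ijk_def successively_append_iff successively_Cons)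
qed

lemma well_formed_split_op_ijk:
  assumes "is_hamiltonian n v" "k' \<le> n + 1"
  shows "\<forall>q\<in>set (split_op_ijk v i' i j k k'). well_formed_op n q \<and> drone_respects_h n v q"
proof -
  have bij: "bij_betw v {0..n+1} {0..n+1}" using is_hamiltonian_bij_betw[OF assms(1)] .
  have "v j \<in> {1..n}" using assms order unfolding is_hamiltonian_def bij_betw_def by auto
  moreover have "v j \<notin> v ` ({i..k} - {j})"
    using bij assms(2) order unfolding bij_betw_def inj_on_def by auto
  moreover have "v ` ({i..k} - {j}) \<subseteq> {0..n+1}"
    using bij assms(2) order unfolding bij_betw_def by auto
  ultimately have "well_formed_op n (op_ijk v i j k)"
    using order by (simp add: well_formed_op_def length_op_ijk set_op_ijk)
  moreover have "drone_respects_h n v (op_ijk v i j k)"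
  proof -
    have "k \<le> n + 1" using order assms(2) by simp
    then show ?thesis
      using order unfolding drone_respects_h_def by (simp add: hd_op_ijk last_op_ijk) blast
  qed
  moreover have "well_formed_op n (truck_op v a b) \<and> drone_respects_h n v (truck_op v a b)"
    if "a < b" "b \<le> n + 1" for a b
  proof -
    have "v ` {a..b} \<subseteq> {0..n+1}" using bij that unfolding bij_betw_def by auto
    then show ?thesis using that
      by (auto simp: well_formed_op_def drone_respects_h_def truck_op_def atLeastLessThanSuc_atLeastAtMost
          simp del: upt_Suc)
  qed
  ultimately show ?thesis using order assms(2) by (auto simp: split_op_ijk_def)
qed

end

lemma h_optimal_split_op_ijk:
  assumes "is_hamiltonian n v" "h_optimal n tR tD v (A @ op_ijk v i' j k' # B)"
    and "i' \<le> i" "i < j" "j < k" "k \<le> k'" "k' \<le> n + 1"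
    and "drone_fast tR tD (op_ijk v i j k)"
  shows "h_optimal n tR tD v (A @ split_op_ijk v i' i j k k' @ B)"
proof (rule h_optimal_replace_op[OF assms(2)])
  show "split_op_ijk v i' i j k k' \<noteq> []" by (simp add: split_op_ijk_def)
  show "\<forall>q\<in>set (split_op_ijk v i' i j k k'). well_formed_op n q \<and> drone_respects_h n v q"
    using assms(3-6,1,7) by (rule well_formed_split_op_ijk)
  show "successively linked (split_op_ijk v i' i j k k')"
    using assms(3-6) by (rule linked_split_op_ijk)
  show "truck_seq (split_op_ijk v i' i j k k') = fst (op_ijk v i' j k')"
    using assms(3-6) by (rule truck_seq_split_op_ijk)
  show "drone_nodes (split_op_ijk v i' i j k k') = drone_nodes [op_ijk v i' j k']"
    by (rule drone_nodes_split_op_ijk)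
  show "\<forall>q\<in>set (split_op_ijk v i' i j k k'). op_time tR tD q = path_time tR (fst q)"
    using assms(8) by (rule op_time_split_op_ijk)
qed

lemma op_ijk_notin_split_solution:
  assumes "is_hamiltonian n v" "is_solution n (A @ split_op_ijk v i' i j k k' @ B)"
    and "i < j" "j < k" "k \<le> n + 1" "a \<le> i" "k \<le> b" "b \<le> n + 1" "(a, b) \<noteq> (i, k)"
  shows "op_ijk v a j b \<notin> set (A @ split_op_ijk v i' i j k k' @ B)"
proof -
  define A' where "A' = A @ (if i' < i then [truck_op v i' i] else [])"
  define B' where "B' = (if k < k' then [truck_op v k k'] else []) @ B"
  have split: "A @ split_op_ijk v i' i j k k' @ B = A' @ op_ijk v i j k # B'"
    by (simp add: A'_def B'_def split_op_ijk_def)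
  have "inj_on v {0..n+1}"
    using is_hamiltonian_bij_betw[OF assms(1)] by (rule bij_betw_imp_inj_on)
  moreover have "a < j" "j < b" using assms(3,4,6,7) by simp_all
  ultimately show ?thesis
    using op_ijk_unique_in_solution[of v "n+1" n A' i j k B' a b] assms(2-5,8,9) unfolding split by blast
qed

theorem mainTheorem4:
  fixes n :: nat and tR tD :: "nat \<Rightarrow> nat \<Rightarrow> real" and v :: "nat \<Rightarrow> nat"
    and i j k :: nat
  assumes "n > 0"
    and "\<forall>x \<in> {0..n+1}. \<forall>y \<in> {0..n+1}. tR x y \<ge> 0 \<and> tD x y \<ge> 0"
    and "is_hamiltonian n v"
    and "i < j" and "j < k" and "k \<le> n + 1"
    and "drone_fast tR tD (op_ijk v i j k)"
  shows "\<exists>S. h_optimal n tR tD v S \<and>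
    (\<forall>i' k'. i' \<le> i \<longrightarrow> k \<le> k' \<longrightarrow> k' \<le> n + 1 \<longrightarrow> (i', k') \<noteq> (i, k)
        \<longrightarrow> op_ijk v i' j k' \<notin> set S)"
proof -
  obtain S0 where opt0: "h_optimal n tR tD v S0" using h_optimal_exists[OF assms(3)] by blast
  show ?thesis
  proof (cases "\<exists>i' k'. i' \<le> i \<and> k \<le> k' \<and> k' \<le> n + 1 \<and> op_ijk v i' j k' \<in> set S0")
    case False
    with opt0 show ?thesis by blast
  next
    case True
    then obtain i' k' A B where ik: "i' \<le> i" "k \<le> k'" "k' \<le> n + 1"
      and "S0 = A @ op_ijk v i' j k' # B"
      by (metis split_list)
    then have opt: "h_optimal n tR tD v (A @ split_op_ijk v i' i j k k' @ B)"
      using h_optimal_split_op_ijk assms(3-5,7) opt0 by blast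
    then have "is_solution n (A @ split_op_ijk v i' i j k k' @ B)" by (simp add: h_optimal_def)
    with opt show ?thesis using op_ijk_notin_split_solution assms(3-6) by blast
  qed
qed

end
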